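(* Let $V$ be a two-sided vector space of rank $n$ with simultaneous basis $y_1,\dots,y_n$, and let $A=(a_{ij})$ and $B=(b_{ij})$ be the $n\times n$ matrices of additive functions $K\to K$ defined by $y_i\alpha=\sum_j a_{ij}(\alpha)y_j$ and $\delta y_i=\sum_j y_jb_{ji}(\delta)$ for all $\alpha,\delta\in K$. Then $A^TB=BA^T=I_n$ in $M_n(F)$.
   Context: Let $k\subset K$ be fields. A two-sided vector space is a $K\otimes_kK$-module; left (resp. right) multiplication by $K$ is the action of $K\otimes1$ (resp. $1\otimes K$). Rank $n$ means dimension $n$ both as left and right $K$-vector space; a simultaneous basis is a basis for both actions. $F$ is the ring of additive functions $K\to K$ with pointwise addition and multiplication given by composition, so that in $M_n(F)$ the $(k,i)$ entry of $A^TB$ is the function $\delta\mapsto\sum_j a_{jk}(b_{ji}(\delta))$; $I_n$ is the identity matrix whose diagonal entries are the identity function. *)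

theory Defs
  imports Complex_Main
begin

definition is_subfield :: "'a::field set \<Rightarrow> bool" where
  "is_subfield k \<longleftrightarrow> 0 \<in> k \<and> 1 \<in> k \<and>
     (\<forall>x\<in>k. \<forall>y\<in>k. x + y \<in> k \<and> x - y \<in> k \<and> x * y \<in> k) \<and>
     (\<forall>x\<in>k. x \<noteq> 0 \<longrightarrow> inverse x \<in> k)"

text \<open>A two-sided vector space over K relative to k, i.e. a module over K tensor_k K:
  a left K-vector space (lmul) and a right K-vector space (rmul), whose actions
  commute and agree on k.\<close>
definition two_sided_space ::
  "'a::field set \<Rightarrow> ('a \<Rightarrow> 'v::ab_group_add \<Rightarrow> 'v) \<Rightarrow> ('v \<Rightarrow> 'a \<Rightarrow> 'v) \<Rightarrow> bool" where
  "two_sided_space k lmul rmul \<longleftrightarrow>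
     is_subfield k \<and>
     vector_space lmul \<and>
     vector_space (\<lambda>c v. rmul v c) \<and>
     (\<forall>a b x. rmul (lmul a x) b = lmul a (rmul x b)) \<and>
     (\<forall>c\<in>k. \<forall>x. lmul c x = rmul x c)"

definition simultaneous_basis ::
  "('a::field \<Rightarrow> 'v::ab_group_add \<Rightarrow> 'v) \<Rightarrow> ('v \<Rightarrow> 'a \<Rightarrow> 'v) \<Rightarrow> nat \<Rightarrow> (nat \<Rightarrow> 'v) \<Rightarrow> bool" where
  "simultaneous_basis lmul rmul n y \<longleftrightarrow>
     inj_on y {..<n} \<and>
     \<not> module.dependent lmul (y ` {..<n}) \<and>
     module.span lmul (y ` {..<n}) = UNIV \<and>
     \<not> module.dependent (\<lambda>c v. rmul v c) (y ` {..<n}) \<and>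
     module.span (\<lambda>c v. rmul v c) (y ` {..<n}) = UNIV"

end

theory Submission
  imports Defs
begin

text \<open>Expanding \<open>\<delta> y\<^sub>q\<close> first through \<open>B\<close> and then each \<open>y\<^sub>j \<beta>\<close> through \<open>A\<close>
  writes \<open>\<delta> y\<^sub>q\<close> as a left combination of the \<open>y\<^sub>p\<close> with coefficients \<open>(A\<^sup>T B)\<^sub>p\<^sub>q(\<delta>)\<close>;
  left independence of the basis forces these to be \<open>\<delta>\<close> on the diagonal and \<open>0\<close> elsewhere.
  Exchanging the roles of the left and right actions gives \<open>B A\<^sup>T = I\<^sub>n\<close> in the same way.\<close>

lemma (in module) independent_indexed_coeffs_unique:
  fixes n :: nat
  assumes inj: "inj_on y {..<n}" and ind: "\<not> dependent (y ` {..<n})"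
    and eq: "(\<Sum>p<n. scale (c p) (y p)) = (\<Sum>p<n. scale (d p) (y p))"
    and p: "p < n"
  shows "c p = d p"
proof -
  define u where "u v = c (inv_into {..<n} y v) - d (inv_into {..<n} y v)" for v
  have "(\<Sum>v\<in>y ` {..<n}. scale (u v) v) = (\<Sum>q<n. scale (u (y q)) (y q))"
    by (rule sum.reindex[OF inj, unfolded comp_def])
  also have "\<dots> = (\<Sum>q<n. scale (c q) (y q) - scale (d q) (y q))"
    by (rule sum.cong) (auto simp: u_def inv_into_f_f[OF inj] scale_left_diff_distrib)
  also have "\<dots> = 0"
    using eq by (simp add: sum_subtractf)
  finally have combination_zero: "(\<Sum>v\<in>y ` {..<n}. scale (u v) v) = 0" .
  have "u (y p) = 0"
    by (rule independentD[OF ind _ _ combination_zero]) (use p in auto)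
  then show ?thesis
    using p by (simp add: u_def inv_into_f_f[OF inj])
qed

text \<open>No structure is assumed on \<open>act\<close>, so the lemma applies both to the left action
  (with \<open>act\<close> the right one) and, with the roles exchanged, to the right action.\<close>

lemma (in module) transition_coeffs_compose_eq_identity:
  fixes n :: nat
  assumes inj: "inj_on y {..<n}" and ind: "\<not> dependent (y ` {..<n})"
    and A: "\<And>i \<alpha>. i < n \<Longrightarrow> act \<alpha> (y i) = (\<Sum>j<n. scale (a i j \<alpha>) (y j))"
    and B: "\<And>i \<delta>. i < n \<Longrightarrow> scale \<delta> (y i) = (\<Sum>j<n. act (b j i \<delta>) (y j))"
    and p: "p < n" and q: "q < n"
  shows "(\<Sum>j<n. a j p (b j q \<delta>)) = (if p = q then \<delta> else 0)"
proof -
  have "(\<Sum>p<n. scale (\<Sum>j<n. a j p (b j q \<delta>)) (y p))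
      = (\<Sum>j<n. \<Sum>p<n. scale (a j p (b j q \<delta>)) (y p))"
    by (subst sum.swap) (simp add: scale_sum_left)
  also have "\<dots> = (\<Sum>j<n. act (b j q \<delta>) (y j))"
    using A by (intro sum.cong) auto
  also have "\<dots> = scale \<delta> (y q)"
    using B q by simp
  also have "\<dots> = (\<Sum>p<n. scale (if p = q then \<delta> else 0) (y p))"
    using q by (simp add: if_distrib[of "\<lambda>c. scale c _"] sum.delta cong: if_cong)
  finally show ?thesis
    by (rule independent_indexed_coeffs_unique[OF inj ind _ p])
qed

theorem proposition3p6:
  fixes k :: "'a::field set"
    and lmul :: "'a \<Rightarrow> 'v::ab_group_add \<Rightarrow> 'v"
    and rmul :: "'v \<Rightarrow> 'a \<Rightarrow> 'v"
    and n :: nat and y :: "nat \<Rightarrow> 'v"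
    and a b :: "nat \<Rightarrow> nat \<Rightarrow> 'a \<Rightarrow> 'a"
  assumes V: "two_sided_space k lmul rmul"
    and basis: "simultaneous_basis lmul rmul n y"
    and A: "\<forall>i<n. \<forall>\<alpha>. rmul (y i) \<alpha> = (\<Sum>j<n. lmul (a i j \<alpha>) (y j))"
    and B: "\<forall>i<n. \<forall>\<delta>. lmul \<delta> (y i) = (\<Sum>j<n. rmul (y j) (b j i \<delta>))"
  shows "(\<forall>p<n. \<forall>q<n. \<forall>\<delta>. (\<Sum>j<n. a j p (b j q \<delta>)) = (if p = q then \<delta> else 0))
       \<and> (\<forall>p<n. \<forall>q<n. \<forall>\<delta>. (\<Sum>j<n. b p j (a q j \<delta>)) = (if p = q then \<delta> else 0))"
proof -
  interpret L: vector_space lmul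
    using V by (simp add: two_sided_space_def)
  interpret R: vector_space "\<lambda>c v. rmul v c"
    using V by (simp add: two_sided_space_def)
  have inj: "inj_on y {..<n}" and indL: "\<not> L.dependent (y ` {..<n})"
    and indR: "\<not> R.dependent (y ` {..<n})"
    using basis by (auto simp: simultaneous_basis_def)
  have "(\<Sum>j<n. a j p (b j q \<delta>)) = (if p = q then \<delta> else 0)" if "p < n" "q < n" for p q \<delta>
    using L.transition_coeffs_compose_eq_identity[OF inj indL, of "\<lambda>c v. rmul v c" a b]
      A B that by simp
  moreover have "(\<Sum>j<n. b p j (a q j \<delta>)) = (if p = q then \<delta> else 0)" if "p < n" "q < n" for p q \<delta>
    using R.transition_coeffs_compose_eq_identity[OF inj indR, of lmul "\<lambda>i j. b j i" "\<lambda>j i. a i j"]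
      A B that by simp
  ultimately show ?thesis
    by blast
qed

end
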